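(* Let $f:\mathbb{R}^p\to\mathbb{R}\cup\{+\infty\}$ be self-concordant, $\psi:\mathbb{R}^n\to\mathbb{R}\cup\{+\infty\}$ proper, closed, convex, and $D\in\mathbb{R}^{n\times p}$ of full row rank ($n\le p$). Let $\varphi(y):=f^\ast(-D^\top y)$, and let $y^k\in\operatorname{dom}\varphi$ with $\nabla^2\varphi(y^k)=D\nabla^2 f^\ast(-D^\top y^k)D^\top\succ0$. Fix $\xi^0\in\partial\psi^\ast(y^0)$ for some $y^0$, $\tau_{k+1}\in(0,1]$, and set $\nabla\varphi_{\tau_{k+1}}(y^k):=\nabla\varphi(y^k)-(\tfrac{1}{\tau_{k+1}}-1)\xi^0$, $$\mathcal{P}_k(y):=\langle\nabla\varphi_{\tau_{k+1}}(y^k),y-y^k\rangle+\tfrac12\langle\nabla^2\varphi(y^k)(y-y^k),y-y^k\rangle+\tfrac{1}{\tau_{k+1}}\psi^\ast(y),$$ with minimizer $\bar y^{k+1}$, and $H:=\nabla^2\varphi(y^k)^{-1}$, $h:=y^k-\nabla^2\varphi(y^k)^{-1}\nabla\varphi_{\tau_{k+1}}(y^k)$. Let $\delta\ge0$ and let $z^{k+1}\in\mathbb{R}^n$ be a $\delta$-approximate solution of $\min_z\{\tfrac12\langle Hz,z\rangle-\langle h,z\rangle+\tfrac{1}{\tau_{k+1}}\psi(\tau_{k+1}z)\}$ in the sense that there exists $\tilde e_k$ with $\|\tilde e_k\|_{y^k}\le\delta$ and $\tilde e_k\in Hz^{k+1}-h+\partial\psi(\tau_{k+1}z^{k+1})$.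 Define $$y^{k+1}:=y^k-\nabla^2\varphi(y^k)^{-1}\big(\nabla\varphi_{\tau_{k+1}}(y^k)+z^{k+1}\big)+\tilde e_k.$$ Then $\mathcal{P}_k(y^{k+1})-\mathcal{P}_k(\bar y^{k+1})\le\frac{\delta^2}{2}$.
   Context: $f^\ast,\psi^\ast$ denote Fenchel conjugates. Local norm of $\varphi$: $\|u\|_y:=\langle\nabla^2\varphi(y)u,u\rangle^{1/2}$. Self-concordance of $f$: $|\langle\nabla^3 f(x)[u]u,u\rangle|\le2\langle\nabla^2 f(x)u,u\rangle^{3/2}$. *)

theory Defs
  imports "HOL-Analysis.Analysis"
begin

text \<open>Extended-real-valued functions \<open>f : E \<Rightarrow> \<real> \<union> {+\<infinity>}\<close> are modelled as \<open>E \<Rightarrow> ereal\<close>.\<close>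

definition edom :: "('a \<Rightarrow> ereal) \<Rightarrow> 'a set" where
  "edom f = {x. f x < \<infinity>}"

definition proper_fun :: "('a \<Rightarrow> ereal) \<Rightarrow> bool" where
  "proper_fun f \<longleftrightarrow> (\<forall>x. f x \<noteq> -\<infinity>) \<and> (\<exists>x. f x \<noteq> \<infinity>)"

definition convex_fun :: "('a::real_vector \<Rightarrow> ereal) \<Rightarrow> bool" where
  "convex_fun f \<longleftrightarrow> convex {(x, t::real). f x \<le> ereal t}"

definition closed_fun :: "('a::topological_space \<Rightarrow> ereal) \<Rightarrow> bool" where
  "closed_fun f \<longleftrightarrow> closed {(x, t::real). f x \<le> ereal t}"

definition fconj :: "('a::real_inner \<Rightarrow> ereal) \<Rightarrow> 'a \<Rightarrow> ereal" where
  "fconj f y = (SUP x. ereal (y \<bullet> x) - f x)"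

definition subdiff :: "('a::real_inner \<Rightarrow> ereal) \<Rightarrow> 'a \<Rightarrow> 'a set" where
  "subdiff f x = {g. \<bar>f x\<bar> \<noteq> \<infinity> \<and> (\<forall>z. f x + ereal (g \<bullet> (z - x)) \<le> f z)}"

definition self_concordant :: "('a::euclidean_space \<Rightarrow> ereal) \<Rightarrow> bool" where
  "self_concordant f \<longleftrightarrow>
     (\<forall>x. f x \<noteq> -\<infinity>) \<and> open (edom f) \<and> convex_fun f \<and> closed_fun f \<and>
     (\<exists>(f1 :: 'a \<Rightarrow> 'a \<Rightarrow>\<^sub>L real) (f2 :: 'a \<Rightarrow> 'a \<Rightarrow>\<^sub>L 'a \<Rightarrow>\<^sub>L real)
        (f3 :: 'a \<Rightarrow> 'a \<Rightarrow>\<^sub>L 'a \<Rightarrow>\<^sub>L 'a \<Rightarrow>\<^sub>L real).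
        continuous_on (edom f) f3 \<and>
        (\<forall>x\<in>edom f.
           ((\<lambda>x. real_of_ereal (f x)) has_derivative blinfun_apply (f1 x)) (at x) \<and>
           (f1 has_derivative blinfun_apply (f2 x)) (at x) \<and>
           (f2 has_derivative blinfun_apply (f3 x)) (at x) \<and>
           (\<forall>u. \<bar>blinfun_apply (blinfun_apply (blinfun_apply (f3 x) u) u) u\<bar>
                 \<le> 2 * (blinfun_apply (blinfun_apply (f2 x) u) u) powr (3/2))))"

definition pos_def :: "real^'n^'n \<Rightarrow> bool" where
  "pos_def M \<longleftrightarrow> transpose M = M \<and> (\<forall>v. v \<noteq> 0 \<longrightarrow> v \<bullet> (M *v v) > 0)"

text \<open>Local norm \<open>||u||_y\<close> w.r.t. the Hessian M = Hessian of phi at y.\<close>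
definition local_norm :: "real^'n^'n \<Rightarrow> real^'n \<Rightarrow> real" where
  "local_norm M u = sqrt (u \<bullet> (M *v u))"

end

theory Submission
  imports Defs
begin

text \<open>Because \<open>y\<^sup>k\<^sup>+\<^sup>1 \<in> \<partial>\<psi>(\<tau>z\<^sup>k\<^sup>+\<^sup>1)\<close>, Fenchel--Young makes
  \<open>y \<mapsto> \<langle>y, \<tau>z\<^sup>k\<^sup>+\<^sup>1\<rangle> - \<psi>(\<tau>z\<^sup>k\<^sup>+\<^sup>1)\<close> an affine minorant of \<open>\<psi>\<^sup>*\<close> that is exact at \<open>y\<^sup>k\<^sup>+\<^sup>1\<close>.
  So \<open>P\<^sub>k\<close> dominates a quadratic \<open>Q\<close> agreeing with it at \<open>y\<^sup>k\<^sup>+\<^sup>1\<close>, and the definition of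
  \<open>y\<^sup>k\<^sup>+\<^sup>1\<close> says precisely \<open>\<nabla>Q(y\<^sup>k\<^sup>+\<^sup>1) = \<nabla>\<^sup>2\<phi>(y\<^sup>k) e\<^sub>k\<close>. Completing the square in the
  local norm, \<open>Q(y\<^sup>k\<^sup>+\<^sup>1) - Q(y) = \<parallel>e\<^sub>k\<parallel>\<^sup>2/2 - \<parallel>y - y\<^sup>k\<^sup>+\<^sup>1 + e\<^sub>k\<parallel>\<^sup>2/2\<close>.\<close>

lemma fconj_ge: "ereal (y \<bullet> x) - f x \<le> fconj f y" for f :: "'a::real_inner \<Rightarrow> ereal"
  unfolding fconj_def by (rule SUP_upper) simp

lemma fconj_eq_if_subdiff:
  assumes "g \<in> subdiff f x"
  shows "fconj f g = ereal (g \<bullet> x) - f x"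
proof (rule antisym)
  obtain r where r: "f x = ereal r"
    using assms unfolding subdiff_def by (cases "f x") auto
  have "ereal (g \<bullet> v) - f v \<le> ereal (g \<bullet> x) - f x" for v
  proof -
    have "ereal (r + g \<bullet> (v - x)) \<le> f v"
      using assms r unfolding subdiff_def by auto
    then show ?thesis
      by (cases "f v") (auto simp: r inner_diff_right)
  qed
  then show "fconj f g \<le> ereal (g \<bullet> x) - f x"
    unfolding fconj_def by (rule SUP_least)
qed (rule fconj_ge)

lemma pos_def_imp_invertible:
  assumes "pos_def M"
  shows "invertible M"
proof -
  have "M *v x = 0 \<Longrightarrow> x = 0" for x
    using assms unfolding pos_def_def by (metis inner_zero_right less_irrefl)
  then show ?thesis
    by (simp add: matrix_left_invertible_ker invertible_left_inverse)
qed

lemma pos_def_matrix_inv_right: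
  assumes "pos_def M"
  shows "M *v (matrix_inv M *v x) = x"
proof -
  have "M ** matrix_inv M = mat 1 \<and> matrix_inv M ** M = mat 1"
    using pos_def_imp_invertible[OF assms] unfolding invertible_def matrix_inv_def by (rule someI_ex)
  then show ?thesis by (simp add: matrix_vector_mul_assoc)
qed

lemma pos_def_quad_nonneg:
  assumes "pos_def M"
  shows "0 \<le> (M *v v) \<bullet> v"
  using assms unfolding pos_def_def
  by (cases "v = 0") (auto simp: inner_commute less_imp_le)

lemma local_norm_le_imp_quad_le:
  assumes "pos_def M" "local_norm M e \<le> \<delta>"
  shows "(M *v e) \<bullet> e \<le> \<delta>\<^sup>2"
proof -
  have "sqrt ((M *v e) \<bullet> e) \<le> \<delta>"
    using assms(2) unfolding local_norm_def by (simp add: inner_commute)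
  then show ?thesis
    using pos_def_quad_nonneg[OF assms(1)] real_sqrt_le_iff by fastforce
qed

lemma symmetric_inner_swap:
  fixes M :: "real^'n^'n"
  assumes "transpose M = M"
  shows "(M *v a) \<bullet> b = (M *v b) \<bullet> a"
  by (metis assms dot_lmul_matrix inner_commute transpose_matrix_vector)

lemma symmetric_quad_add:
  fixes M :: "real^'n^'n"
  assumes "transpose M = M"
  shows "(M *v (a + b)) \<bullet> (a + b) = (M *v a) \<bullet> a + 2 * ((M *v a) \<bullet> b) + (M *v b) \<bullet> b"
  using symmetric_inner_swap[OF assms, of b a]
  by (simp add: matrix_vector_right_distrib inner_add_left inner_add_right)

lemma pos_def_quadratic_model_gap:
  fixes M :: "real^'n^'n"
  assumes M: "pos_def M" and grad: "M *v (x - x0) + c = M *v e"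
  shows "(c \<bullet> (x - x0) + (M *v (x - x0)) \<bullet> (x - x0) / 2)
       - (c \<bullet> (y - x0) + (M *v (y - x0)) \<bullet> (y - x0) / 2) \<le> (M *v e) \<bullet> e / 2"
proof -
  have sym: "transpose M = M" using M unfolding pos_def_def by simp
  define a where "a = x - x0"
  define d where "d = y - x"
  have "y - x0 = a + d" unfolding a_def d_def by simp
  then have "(c \<bullet> (x - x0) + (M *v (x - x0)) \<bullet> (x - x0) / 2)
       - (c \<bullet> (y - x0) + (M *v (y - x0)) \<bullet> (y - x0) / 2)
       = - ((M *v a + c) \<bullet> d) - (M *v d) \<bullet> d / 2"
    unfolding a_def[symmetric]
    by (simp add: symmetric_quad_add[OF sym] inner_add_right inner_add_left algebra_simps
        symmetric_inner_swap[OF sym, of d a])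
  also have "\<dots> = - ((M *v e) \<bullet> d) - (M *v d) \<bullet> d / 2"
    unfolding a_def grad ..
  also have "\<dots> = (M *v e) \<bullet> e / 2 - (M *v (d + e)) \<bullet> (d + e) / 2"
    by (simp add: symmetric_quad_add[OF sym] symmetric_inner_swap[OF sym, of d e]
        inner_commute[of _ d] algebra_simps)
  also have "\<dots> \<le> (M *v e) \<bullet> e / 2"
    using pos_def_quad_nonneg[OF M, of "d + e"] by simp
  finally show ?thesis .
qed

lemma fconj_scaled_diff_le_if_subdiff:
  assumes g: "g \<in> subdiff f w" and t: "0 \<le> t"
  shows "ereal a + ereal t * fconj f g - (ereal b + ereal t * fconj f y)
       \<le> ereal (a - b + t * ((g - y) \<bullet> w))"
proof -
  obtain r where r: "f w = ereal r"
    using g unfolding subdiff_def by (cases "f w") auto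
  have at_g: "ereal a + ereal t * fconj f g = ereal (a + t * (g \<bullet> w - r))"
    by (simp add: fconj_eq_if_subdiff[OF g] r)
  have "ereal (t * (y \<bullet> w - r)) \<le> ereal t * fconj f y"
    using ereal_mult_left_mono[OF fconj_ge[of y w f], of "ereal t"] t by (simp add: r)
  then have at_y: "ereal (b + t * (y \<bullet> w - r)) \<le> ereal b + ereal t * fconj f y"
    by (simp flip: plus_ereal.simps add: add_left_mono)
  show ?thesis
    unfolding at_g using at_y
    by (cases "ereal b + ereal t * fconj f y") (auto simp: algebra_simps inner_diff_left)
qed

theorem lemma6p1:
  fixes f :: "real^'p \<Rightarrow> ereal" and \<psi> :: "real^'n \<Rightarrow> ereal"
    and D :: "real^'p^'n"
    and \<phi> :: "real^'n \<Rightarrow> ereal"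
    and g\<phi> :: "real^'n \<Rightarrow> real^'n" and H\<phi> :: "real^'n^'n"
    and yk y0 \<xi>0 ybar z e :: "real^'n"
    and \<tau> \<delta> :: real
  assumes sc: "self_concordant f"
    and psi_proper: "proper_fun \<psi>" and psi_closed: "closed_fun \<psi>" and psi_convex: "convex_fun \<psi>"
    and n_le_p: "CARD('n) \<le> CARD('p)"
    and D_rank: "rank D = CARD('n)"
    and phi_def: "\<phi> = (\<lambda>y. fconj f (- (transpose D *v y)))"
    and yk_dom: "yk \<in> edom \<phi>"
    \<comment> \<open>\<phi> is finite near yk with gradient g\<phi>, and g\<phi> is differentiable at yk with Hessian H\<phi>\<close>
    and grad: "\<exists>U. open U \<and> yk \<in> U \<and> (\<forall>y\<in>U. \<bar>\<phi> y\<bar> \<noteq> \<infinity> \<and>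
                  ((\<lambda>y. real_of_ereal (\<phi> y)) has_derivative (\<lambda>v. g\<phi> y \<bullet> v)) (at y))"
    and hess: "(g\<phi> has_derivative (\<lambda>v. H\<phi> *v v)) (at yk)"
    and hess_pd: "pos_def H\<phi>"
    and xi0: "\<xi>0 \<in> subdiff (fconj \<psi>) y0"
    and tau: "0 < \<tau>" "\<tau> \<le> 1"
    and Pmin: "\<forall>y. (let P = (\<lambda>y. ereal ((g\<phi> yk - (1/\<tau> - 1) *\<^sub>R \<xi>0) \<bullet> (y - yk))
                                + ereal ((1/2) * ((H\<phi> *v (y - yk)) \<bullet> (y - yk)))
                                + ereal (1/\<tau>) * fconj \<psi> y)
                     in P ybar \<le> P y)"
    and delta: "0 \<le> \<delta>"
    and e_norm: "local_norm H\<phi> e \<le> \<delta>"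
    and e_incl: "e \<in> (\<lambda>g. matrix_inv H\<phi> *v z - (yk - matrix_inv H\<phi> *v (g\<phi> yk - (1/\<tau> - 1) *\<^sub>R \<xi>0)) + g)
                     ` subdiff \<psi> (\<tau> *\<^sub>R z)"
  shows "(let P = (\<lambda>y. ereal ((g\<phi> yk - (1/\<tau> - 1) *\<^sub>R \<xi>0) \<bullet> (y - yk))
                        + ereal ((1/2) * ((H\<phi> *v (y - yk)) \<bullet> (y - yk)))
                        + ereal (1/\<tau>) * fconj \<psi> y);
              ynext = yk - matrix_inv H\<phi> *v ((g\<phi> yk - (1/\<tau> - 1) *\<^sub>R \<xi>0) + z) + e
          in P ynext - P ybar \<le> ereal (\<delta>\<^sup>2 / 2))"
proof -
  define c where "c = g\<phi> yk - (1/\<tau> - 1) *\<^sub>R \<xi>0"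
  define L where "L = (\<lambda>y. c \<bullet> (y - yk) + (H\<phi> *v (y - yk)) \<bullet> (y - yk) / 2)"
  obtain g where g: "g \<in> subdiff \<psi> (\<tau> *\<^sub>R z)"
    and e_eq: "e = matrix_inv H\<phi> *v z - (yk - matrix_inv H\<phi> *v c) + g"
    using e_incl unfolding c_def by blast
  have ynext: "yk - matrix_inv H\<phi> *v (c + z) + e = g"
    unfolding e_eq by (simp add: matrix_vector_right_distrib)
  have "H\<phi> *v (g - yk) + (c + z) = H\<phi> *v e"
    unfolding ynext[symmetric]
    by (simp add: pos_def_matrix_inv_right[OF hess_pd] matrix_vector_mult_diff_distrib
        matrix_vector_right_distrib)
  then have "L g - L ybar + (g - ybar) \<bullet> z \<le> (H\<phi> *v e) \<bullet> e / 2"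
    using pos_def_quadratic_model_gap[OF hess_pd, of g yk "c + z" e ybar]
    unfolding L_def by (simp add: inner_add_left inner_diff_left inner_diff_right inner_commute[of _ z])
  also have "\<dots> \<le> \<delta>\<^sup>2 / 2"
    using local_norm_le_imp_quad_le[OF hess_pd e_norm] by simp
  finally have "L g - L ybar + (1/\<tau>) * ((g - ybar) \<bullet> (\<tau> *\<^sub>R z)) \<le> \<delta>\<^sup>2 / 2"
    using tau by simp
  moreover have "ereal (L g) + ereal (1/\<tau>) * fconj \<psi> g - (ereal (L ybar) + ereal (1/\<tau>) * fconj \<psi> ybar)
      \<le> ereal (L g - L ybar + (1/\<tau>) * ((g - ybar) \<bullet> (\<tau> *\<^sub>R z)))"
    using tau by (intro fconj_scaled_diff_le_if_subdiff[OF g]) simp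
  ultimately have "ereal (L g) + ereal (1/\<tau>) * fconj \<psi> g - (ereal (L ybar) + ereal (1/\<tau>) * fconj \<psi> ybar)
      \<le> ereal (\<delta>\<^sup>2 / 2)"
    by (meson ereal_less_eq(3) order_trans)
  then show ?thesis
    unfolding Let_def c_def[symmetric] ynext by (simp add: L_def)
qed

end
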